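(* Let $n\ge1$, let $q_1,\dots,q_n$ be positive integers and $c_1,\dots,c_n>0$. For $y_0\in\mathbb{R}$ let $\Gamma_n(x)=y_0-\sum_{j=1}^n c_j\sin(2\pi q_jx)$ and let $\mu_n$ be the probability measure on $\mathbb{T}^2$ obtained as the push-forward of Lebesgue measure on $[0,1]$ under $x\mapsto (x,\Gamma_n(x)) \bmod \mathbb{Z}^2$ (i.e. $\int f\,d\mu_n=\int_0^1 f(x,\Gamma_n(x))\,dx$). Then for every trigonometric polynomial $f$ on $\mathbb{T}^2$ and every $\varepsilon>0$ there exist numbers $\tilde c_n=\tilde c_n(\varepsilon,f)$ and $\tilde q_n=\tilde q_n(\varepsilon,f,c_1,\dots,c_n,q_1,\dots,q_{n-1})$, independent of $y_0$, such that if $c_n>\tilde c_n$ and $q_n>\tilde q_n$ then $$\left|\int_{\mathbb{T}^2}f\,d\mu_n-\int_{\mathbb{T}^2}f(z)\,dz\right|<\varepsilon .$$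
   Context: $\mathbb{T}^2=\mathbb{R}^2/\mathbb{Z}^2$ with Lebesgue measure $dz$. (In the paper, when $q_j=4s_jq_{j-1}$ for natural $s_j$, the graph of $\Gamma_n$ is an invariant curve of $G_n(\alpha)(x,y)=(x+\alpha,\,y+g_n(x)-g_n(x+\alpha))$, $g_n=\sum_{j\le n}c_j\sin 2\pi q_jx$, and $\mu_n$ is its invariant probability measure on that curve for irrational $\alpha$.) *)

theory Defs
  imports "HOL-Analysis.Analysis"
begin

text \<open>Trigonometric polynomials on the torus T^2 = R^2/Z^2, viewed as
  Z^2-periodic complex-valued functions on R^2: finite linear combinations
  of the characters e^{2 pi i (k x + l y)}.\<close>
definition trig_poly_T2 :: "(real \<Rightarrow> real \<Rightarrow> complex) \<Rightarrow> bool" where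
  "trig_poly_T2 f \<longleftrightarrow> (\<exists>S :: (int \<times> int) set. \<exists>a :: int \<times> int \<Rightarrow> complex. finite S \<and>
     (\<forall>x y. f x y = (\<Sum>(k,l)\<in>S. a (k,l) *
        exp (2 * pi * \<i> * complex_of_real (real_of_int k * x + real_of_int l * y)))))"

definition Gamma :: "nat \<Rightarrow> (nat \<Rightarrow> real) \<Rightarrow> (nat \<Rightarrow> nat) \<Rightarrow> real \<Rightarrow> real \<Rightarrow> real" where
  "Gamma n c q y0 x = y0 - (\<Sum>j=1..n. c j * sin (2 * pi * real (q j) * x))"

text \<open>Integral of f against mu_n: push-forward of Lebesgue measure on [0,1]
  under x \<mapsto> (x, Gamma_n x) mod Z^2 (f is Z^2-periodic).\<close>
definition int_mu :: "nat \<Rightarrow> (nat \<Rightarrow> real) \<Rightarrow> (nat \<Rightarrow> nat) \<Rightarrow> real \<Rightarrow> (real \<Rightarrow> real \<Rightarrow> complex) \<Rightarrow> complex" where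
  "int_mu n c q y0 f = integral {0..1} (\<lambda>x. f x (Gamma n c q y0 x))"

text \<open>Integral of f against Lebesgue (Haar) measure on T^2, via the fundamental domain [0,1]^2.\<close>
definition int_T2 :: "(real \<Rightarrow> real \<Rightarrow> complex) \<Rightarrow> complex" where
  "int_T2 f = integral ({0..1} \<times> {0..1}) (\<lambda>z. f (fst z) (snd z))"

end

theory Submission
  imports Defs
begin

text \<open>Expanding \<open>f\<close> into characters \<open>e(kx + ly)\<close>, only those with \<open>l \<noteq> 0\<close> matter: for \<open>l = 0\<close>
  both integrals agree exactly, and the Haar integral of the others is \<open>0\<close>. Splitting off the last
  mode of \<open>\<Gamma>\<^sub>n\<close>, such a character becomes \<open>G(x) H(q\<^sub>n x)\<close> with \<open>G\<close> continuous and unimodular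
  and \<open>H(y) = exp(-2\<pi> i l c\<^sub>n sin 2\<pi>y)\<close> of period \<open>1\<close>. Freezing \<open>G\<close> on the cells of length
  \<open>1/q\<^sub>n\<close> shows that for large \<open>q\<^sub>n\<close> the integral is essentially bounded by \<open>|\<integral>\<^sub>0\<^sup>1 H|\<close>, a
  Bessel integral \<open>J\<^sub>0(2\<pi> l c\<^sub>n)\<close>; it is small once \<open>c\<^sub>n\<close> is large, uniformly in \<open>l \<noteq> 0\<close>, by a
  van der Corput estimate away from the two stationary points of \<open>sin 2\<pi>y\<close>.\<close>

lemma has_vector_derivative_exp_phase_div_derivative:
  fixes \<phi> \<phi>' \<phi>'' :: "real \<Rightarrow> real"
  assumes d1: "(\<phi> has_real_derivative \<phi>' y) (at y)" and d2: "(\<phi>' has_real_derivative \<phi>'' y) (at y)"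
    and nz: "\<phi>' y \<noteq> 0"
  shows "((\<lambda>y. exp (\<i> * of_real (\<phi> y)) * of_real (1 / \<phi>' y)) has_vector_derivative
           \<i> * exp (\<i> * of_real (\<phi> y)) - exp (\<i> * of_real (\<phi> y)) * of_real (\<phi>'' y / (\<phi>' y)\<^sup>2)) (at y)"
proof -
  have "((\<lambda>y. \<i> * of_real (\<phi> y)) has_vector_derivative \<i> * of_real (\<phi>' y)) (at y)"
    by (intro derivative_intros d1)
  then have E: "((\<lambda>y. exp (\<i> * of_real (\<phi> y))) has_vector_derivative
                  \<i> * of_real (\<phi>' y) * exp (\<i> * of_real (\<phi> y))) (at y)"
    using field_vector_diff_chain_at[OF _ DERIV_exp] unfolding o_def by auto
  have "((\<lambda>y. 1 / \<phi>' y) has_real_derivative - \<phi>'' y / (\<phi>' y)\<^sup>2) (at y)"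
    using DERIV_inverse_fun[OF d2 nz] by (simp add: divide_inverse power2_eq_square)
  then have R: "((\<lambda>y. of_real (1 / \<phi>' y) :: complex) has_vector_derivative
                  of_real (- \<phi>'' y / (\<phi>' y)\<^sup>2)) (at y)"
    by (intro derivative_intros)
  show ?thesis
    using has_vector_derivative_mult[OF E R] nz by (simp add: field_simps)
qed

lemma integral_exp_phase_by_parts:
  fixes \<phi> \<phi>' \<phi>'' :: "real \<Rightarrow> real"
  assumes "a \<le> b"
    and d1: "\<And>y. y \<in> {a..b} \<Longrightarrow> (\<phi> has_real_derivative \<phi>' y) (at y)"
    and d2: "\<And>y. y \<in> {a..b} \<Longrightarrow> (\<phi>' has_real_derivative \<phi>'' y) (at y)"
    and "continuous_on {a..b} \<phi>''" and nz: "\<And>y. y \<in> {a..b} \<Longrightarrow> \<phi>' y \<noteq> 0"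
  shows "\<i> * integral {a..b} (\<lambda>y. exp (\<i> * of_real (\<phi> y)))
           = exp (\<i> * of_real (\<phi> b)) * of_real (1 / \<phi>' b) - exp (\<i> * of_real (\<phi> a)) * of_real (1 / \<phi>' a)
             + integral {a..b} (\<lambda>y. exp (\<i> * of_real (\<phi> y)) * of_real (\<phi>'' y / (\<phi>' y)\<^sup>2))"
    (is "\<i> * integral {a..b} ?E = ?F b - ?F a + integral {a..b} ?R")
proof -
  have D: "(?F has_vector_derivative \<i> * ?E y - ?R y) (at y within {a..b})" if "y \<in> {a..b}" for y
    by (rule has_vector_derivative_at_within,
        rule has_vector_derivative_exp_phase_div_derivative[OF d1 d2 nz]) (use that in auto)
  have ftc: "((\<lambda>y. \<i> * ?E y - ?R y) has_integral ?F b - ?F a) {a..b}"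
    using fundamental_theorem_of_calculus[OF \<open>a \<le> b\<close> D] by simp
  have "continuous_on {a..b} \<phi>" "continuous_on {a..b} \<phi>'"
    using d1 d2 by (meson DERIV_isCont continuous_at_imp_continuous_on)+
  then have "continuous_on {a..b} ?E" "continuous_on {a..b} ?R"
    using nz \<open>continuous_on {a..b} \<phi>''\<close> by (auto intro!: continuous_intros)
  then have "integral {a..b} (\<lambda>y. \<i> * ?E y - ?R y) = \<i> * integral {a..b} ?E - integral {a..b} ?R"
    by (simp add: integral_diff integrable_continuous_real)
  then have "\<i> * integral {a..b} ?E - integral {a..b} ?R = ?F b - ?F a"
    using integral_unique[OF ftc] by argo
  then show ?thesis
    by (simp add: algebra_simps)
qed

lemma norm_integral_exp_phase_le:
  fixes \<phi> \<phi>' \<phi>'' :: "real \<Rightarrow> real" and \<kappa> M a b :: real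
  assumes "a \<le> b"
    and d1: "\<And>y. y \<in> {a..b} \<Longrightarrow> (\<phi> has_real_derivative \<phi>' y) (at y)"
    and d2: "\<And>y. y \<in> {a..b} \<Longrightarrow> (\<phi>' has_real_derivative \<phi>'' y) (at y)"
    and "continuous_on {a..b} \<phi>''"
    and "\<kappa> > 0" and \<kappa>: "\<And>y. y \<in> {a..b} \<Longrightarrow> \<kappa> \<le> \<bar>\<phi>' y\<bar>"
    and M: "\<And>y. y \<in> {a..b} \<Longrightarrow> \<bar>\<phi>'' y\<bar> \<le> M"
  shows "cmod (integral {a..b} (\<lambda>y. exp (\<i> * of_real (\<phi> y)))) \<le> 2 / \<kappa> + (b - a) * M / \<kappa>\<^sup>2"
proof -
  define F where "F y = exp (\<i> * of_real (\<phi> y)) * of_real (1 / \<phi>' y)" for y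
  define R where "R y = exp (\<i> * of_real (\<phi> y)) * of_real (\<phi>'' y / (\<phi>' y)\<^sup>2)" for y
  have nz: "\<phi>' y \<noteq> 0" if "y \<in> {a..b}" for y
    using \<kappa>[OF that] \<open>\<kappa> > 0\<close> by auto
  have norm_F: "cmod (F y) \<le> 1 / \<kappa>" if "y \<in> {a..b}" for y
    using \<kappa>[OF that] \<open>\<kappa> > 0\<close> by (simp add: F_def norm_mult norm_divide frac_le)
  have norm_R: "cmod (R y) \<le> M / \<kappa>\<^sup>2" if "y \<in> {a..b}" for y
  proof -
    have "\<kappa>\<^sup>2 \<le> (\<phi>' y)\<^sup>2"
      using \<kappa>[OF that] \<open>\<kappa> > 0\<close> by (metis abs_le_square_iff abs_of_pos)
    moreover have "0 \<le> M"
      using M[OF that] by linarith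
    ultimately show ?thesis
      using M[OF that] \<open>\<kappa> > 0\<close> by (simp add: R_def norm_mult norm_divide norm_power frac_le)
  qed
  have "continuous_on {a..b} \<phi>" "continuous_on {a..b} \<phi>'"
    using d1 d2 by (meson DERIV_isCont continuous_at_imp_continuous_on)+
  then have cont_R: "continuous_on {a..b} R"
    unfolding R_def using nz \<open>continuous_on {a..b} \<phi>''\<close> by (auto intro!: continuous_intros)
  have "cmod (integral {a..b} (\<lambda>y. exp (\<i> * of_real (\<phi> y))))
      = cmod (\<i> * integral {a..b} (\<lambda>y. exp (\<i> * of_real (\<phi> y))))"
    by (simp add: norm_mult)
  also have "\<dots> = cmod ((F b - F a) + integral {a..b} R)"
    unfolding F_def R_def
    by (subst integral_exp_phase_by_parts[OF \<open>a \<le> b\<close> d1 d2 \<open>continuous_on {a..b} \<phi>''\<close> nz]) auto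
  also have "\<dots> \<le> (cmod (F b) + cmod (F a)) + M / \<kappa>\<^sup>2 * (b - a)"
    by (intro norm_triangle_le add_mono norm_triangle_ineq4 integral_bound[OF \<open>a \<le> b\<close> cont_R norm_R])
  also have "\<dots> \<le> 2 / \<kappa> + (b - a) * M / \<kappa>\<^sup>2"
    using norm_F[of a] norm_F[of b] \<open>a \<le> b\<close> by (simp add: mult.commute)
  finally show ?thesis .
qed

lemma abs_cos_2pi_lower_bound_half_period:
  fixes z \<eta> :: real
  assumes "0 < \<eta>" "0 \<le> z" "z \<le> 1/2" "z \<le> 1/4 - \<eta> \<or> 1/4 + \<eta> \<le> z"
  shows "sin (2 * pi * \<eta>) \<le> \<bar>cos (2 * pi * z)\<bar>"
  using assms(4)
proof
  assume "z \<le> 1/4 - \<eta>"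
  then have "pi * (4 * z + 4 * \<eta>) \<le> pi * 1"
    by (intro mult_left_mono) auto
  then have "cos (pi/2 - 2 * pi * \<eta>) \<le> cos (2 * pi * z)"
    using assms by (intro cos_monotone_0_pi_le) (auto simp: field_simps)
  then show ?thesis
    by (simp add: cos_diff)
next
  assume "1/4 + \<eta> \<le> z"
  then have "pi * (1 + 4 * \<eta>) \<le> pi * (4 * z)" "pi * (2 * z) \<le> pi * 1"
    using assms by (intro mult_left_mono; simp)+
  then have "cos (2 * pi * z) \<le> cos (pi/2 + 2 * pi * \<eta>)"
    using assms by (intro cos_monotone_0_pi_le) (auto simp: field_simps)
  then show ?thesis
    by (simp add: cos_add)
qed

lemma abs_cos_2pi_lower_bound:
  fixes y \<eta> :: real
  assumes "0 < \<eta>" "0 \<le> y" "y \<le> 1"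
    and "y \<le> 1/4 - \<eta> \<or> (1/4 + \<eta> \<le> y \<and> y \<le> 3/4 - \<eta>) \<or> 3/4 + \<eta> \<le> y"
  shows "sin (2 * pi * \<eta>) \<le> \<bar>cos (2 * pi * y)\<bar>"
proof (cases "y \<le> 1/2")
  case True
  then show ?thesis
    using assms by (intro abs_cos_2pi_lower_bound_half_period) auto
next
  case False
  have "cos (2 * pi * y) = cos (2 * pi - 2 * pi * y)"
    by (simp add: cos_diff)
  also have "\<dots> = cos (2 * pi * (1 - y))"
    by (simp add: algebra_simps)
  finally show ?thesis
    using assms False by (simp only:) (intro abs_cos_2pi_lower_bound_half_period; auto)
qed

lemma norm_integral_exp_sin_phase_nonstationary_le:
  fixes a b s \<delta> :: real
  assumes "a \<le> b" "b - a \<le> 1" "\<delta> > 0" "s \<noteq> 0"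
    and cos_ge: "\<And>y. y \<in> {a..b} \<Longrightarrow> \<delta> \<le> \<bar>cos (2 * pi * y)\<bar>"
  shows "cmod (integral {a..b} (\<lambda>y. exp (\<i> * of_real (s * sin (2 * pi * y)))))
           \<le> (1 / \<delta> + 1 / \<delta>\<^sup>2) / \<bar>s\<bar>"
proof -
  have "cmod (integral {a..b} (\<lambda>y. exp (\<i> * of_real (s * sin (2 * pi * y)))))
      \<le> 2 / (2 * pi * \<bar>s\<bar> * \<delta>) + (b - a) * (4 * pi\<^sup>2 * \<bar>s\<bar>) / (2 * pi * \<bar>s\<bar> * \<delta>)\<^sup>2"
  proof (rule norm_integral_exp_phase_le[where \<phi>' = "\<lambda>y. 2 * pi * s * cos (2 * pi * y)"
                                           and \<phi>'' = "\<lambda>y. - (4 * pi\<^sup>2 * s * sin (2 * pi * y))"])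
    fix y
    show "((\<lambda>y. s * sin (2 * pi * y)) has_real_derivative 2 * pi * s * cos (2 * pi * y)) (at y)"
      "((\<lambda>y. 2 * pi * s * cos (2 * pi * y)) has_real_derivative - (4 * pi\<^sup>2 * s * sin (2 * pi * y))) (at y)"
      by (auto intro!: derivative_eq_intros simp: power2_eq_square)
    show "\<bar>- (4 * pi\<^sup>2 * s * sin (2 * pi * y))\<bar> \<le> 4 * pi\<^sup>2 * \<bar>s\<bar>"
      by (simp add: abs_mult mult_left_le)
    assume "y \<in> {a..b}"
    then show "2 * pi * \<bar>s\<bar> * \<delta> \<le> \<bar>2 * pi * s * cos (2 * pi * y)\<bar>"
      using cos_ge by (simp add: abs_mult mult_left_mono)
  qed (use assms in \<open>auto intro!: continuous_intros\<close>)
  also have "\<dots> = 1 / pi * (1 / (\<bar>s\<bar> * \<delta>)) + (b - a) * (1 / (\<bar>s\<bar> * \<delta>\<^sup>2))"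
    using assms by (simp add: field_simps power2_eq_square)
  also have "\<dots> \<le> 1 * (1 / (\<bar>s\<bar> * \<delta>)) + 1 * (1 / (\<bar>s\<bar> * \<delta>\<^sup>2))"
    using assms pi_ge_two by (intro add_mono mult_right_mono) auto
  also have "\<dots> = (1 / \<delta> + 1 / \<delta>\<^sup>2) / \<bar>s\<bar>"
    by (simp add: add_divide_distrib mult.commute)
  finally show ?thesis .
qed

lemma norm_integral_exp_sin_phase_le:
  fixes s \<eta> :: real
  assumes "0 < \<eta>" "\<eta> \<le> 1/16" "s \<noteq> 0"
  shows "cmod (integral {0..1} (\<lambda>y. exp (\<i> * of_real (s * sin (2 * pi * y)))))
           \<le> 4 * \<eta> + 3 * (1 / sin (2 * pi * \<eta>) + 1 / (sin (2 * pi * \<eta>))\<^sup>2) / \<bar>s\<bar>"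
proof -
  define h where "h y = exp (\<i> * of_real (s * sin (2 * pi * y)))" for y
  define K where "K = 1 / sin (2 * pi * \<eta>) + 1 / (sin (2 * pi * \<eta>))\<^sup>2"
  have "sin (2 * pi * \<eta>) > 0"
    using assms by (intro sin_gt_zero) (auto intro: order_le_less_trans[of _ "pi / 8"])
  have cont_h: "continuous_on X h" for X
    unfolding h_def by (intro continuous_intros)
  have combine: "integral {a..b} h = integral {a..c} h + integral {c..b} h"
    if "a \<le> c" "c \<le> b" for a b c
    using that by (intro Henstock_Kurzweil_Integration.integral_combine[symmetric]
                     integrable_continuous_real cont_h) auto
  \<comment> \<open>Away from the stationary points \<open>1/4\<close> and \<open>3/4\<close> of the phase the integral is
      \<open>O(1/s)\<close>; the two windows of width \<open>2\<eta>\<close> around them are estimated trivially.\<close>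
  have pieces: "integral {0..1} h = integral {0..1/4-\<eta>} h + integral {1/4-\<eta>..1/4+\<eta>} h
      + integral {1/4+\<eta>..3/4-\<eta>} h + integral {3/4-\<eta>..3/4+\<eta>} h + integral {3/4+\<eta>..1} h"
    using assms by (simp add: combine[of 0 "3/4+\<eta>" 1] combine[of 0 "3/4-\<eta>" "3/4+\<eta>"]
                              combine[of 0 "1/4+\<eta>" "3/4-\<eta>"] combine[of 0 "1/4-\<eta>" "1/4+\<eta>"])
  have window: "cmod (integral {c-\<eta>..c+\<eta>} h) \<le> 2 * \<eta>" for c
    using integral_bound[OF _ cont_h, of "c-\<eta>" "c+\<eta>" 1] assms by (simp add: h_def)
  have good: "cmod (integral {a..b} h) \<le> K / \<bar>s\<bar>"
    if "0 \<le> a" "a \<le> b" "b \<le> 1" and "\<And>y. y \<in> {a..b} \<Longrightarrow>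
         y \<le> 1/4 - \<eta> \<or> (1/4 + \<eta> \<le> y \<and> y \<le> 3/4 - \<eta>) \<or> 3/4 + \<eta> \<le> y" for a b
    unfolding h_def K_def using that assms \<open>sin (2 * pi * \<eta>) > 0\<close>
    by (intro norm_integral_exp_sin_phase_nonstationary_le abs_cos_2pi_lower_bound) auto
  have "cmod (integral {0..1} h) \<le> K / \<bar>s\<bar> + 2 * \<eta> + K / \<bar>s\<bar> + 2 * \<eta> + K / \<bar>s\<bar>"
    unfolding pieces using assms
    by (intro norm_triangle_le add_mono window good) auto
  also have "\<dots> = 4 * \<eta> + 3 * K / \<bar>s\<bar>"
    by simp
  finally show ?thesis
    unfolding h_def K_def .
qed

lemma integral_exp_sin_phase_tendsto_0:
  "((\<lambda>s. integral {0..1} (\<lambda>y. exp (\<i> * of_real (s * sin (2 * pi * y))))) \<longlongrightarrow> 0) at_infinity"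
proof (rule tendsto_iff[THEN iffD2], intro allI impI)
  fix e :: real
  assume "e > 0"
  define \<eta> where "\<eta> = min (1/16) (e/8)"
  define K where "K = 1 / sin (2 * pi * \<eta>) + 1 / (sin (2 * pi * \<eta>))\<^sup>2"
  have \<eta>: "0 < \<eta>" "\<eta> \<le> 1/16" "4 * \<eta> \<le> e/2"
    using \<open>e > 0\<close> by (auto simp: \<eta>_def)
  have "sin (2 * pi * \<eta>) > 0"
    using \<eta> by (intro sin_gt_zero) (auto intro: order_le_less_trans[of _ "pi / 8"])
  then have "K > 0"
    by (simp add: K_def add_pos_pos)
  have "cmod (integral {0..1} (\<lambda>y. exp (\<i> * of_real (s * sin (2 * pi * y))))) < e"
    if "6 * K / e + 1 \<le> \<bar>s\<bar>" for s
  proof -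
    have "6 * K < e * \<bar>s\<bar>" "s \<noteq> 0"
      using that \<open>e > 0\<close> \<open>K > 0\<close> by (auto simp: field_simps)
    then have "3 * K / \<bar>s\<bar> < e/2"
      by (simp add: pos_divide_less_eq)
    have "cmod (integral {0..1} (\<lambda>y. exp (\<i> * of_real (s * sin (2 * pi * y)))))
        \<le> 4 * \<eta> + 3 * K / \<bar>s\<bar>"
      using norm_integral_exp_sin_phase_le[OF \<eta>(1,2) \<open>s \<noteq> 0\<close>] unfolding K_def by simp
    also have "\<dots> < e"
      using \<eta>(3) \<open>3 * K / \<bar>s\<bar> < e/2\<close> by linarith
    finally show ?thesis .
  qed
  then show "\<forall>\<^sub>F s in at_infinity. dist (integral {0..1} (\<lambda>y. exp (\<i> * of_real (s * sin (2 * pi * y))))) 0 < e"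
    unfolding eventually_at_infinity by (auto simp: dist_norm)
qed

lemma integral_sum_uniform_grid:
  fixes h :: "real \<Rightarrow> 'a::banach" and Q :: nat
  assumes "Q > 0" and "h integrable_on {0..1}"
  shows "integral {0..1} h = (\<Sum>m<Q. integral {real m / Q..(real m + 1) / Q} h)"
proof -
  have "integral {0..real M / Q} h = (\<Sum>m<M. integral {real m / Q..(real m + 1) / Q} h)"
    if "M \<le> Q" for M
    using that
  proof (induction M)
    case (Suc M)
    have "h integrable_on {0..real (Suc M) / Q}"
      using Suc.prems by (intro integrable_subinterval_real[OF assms(2)]) (auto simp: field_simps)
    then have "integral {0..real (Suc M) / Q} h
        = integral {0..real M / Q} h + integral {real M / Q..real (Suc M) / Q} h"
      using \<open>Q > 0\<close> by (intro Henstock_Kurzweil_Integration.integral_combine[symmetric] divide_right_mono) auto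
    with Suc show ?case
      by (simp add: add.commute)
  qed simp
  from this[of Q] show ?thesis
    using \<open>Q > 0\<close> by simp
qed

lemma norm_integral_le_uniform_grid:
  fixes h :: "real \<Rightarrow> 'a::banach" and Q :: nat
  assumes "Q > 0" and "h integrable_on {0..1}"
    and cell: "\<And>m. m < Q \<Longrightarrow> norm (integral {real m / Q..(real m + 1) / Q} h) \<le> B / Q"
  shows "norm (integral {0..1} h) \<le> B"
proof -
  have "norm (integral {0..1} h) \<le> (\<Sum>m<Q. norm (integral {real m / Q..(real m + 1) / Q} h))"
    unfolding integral_sum_uniform_grid[OF assms(1,2)] by (rule norm_sum)
  also have "\<dots> \<le> (\<Sum>m<Q. B / Q)"
    by (intro sum_mono cell) simp
  also have "\<dots> = B"
    using \<open>Q > 0\<close> by simp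
  finally show ?thesis .
qed

lemma periodic_nat_shift:
  fixes H :: "real \<Rightarrow> 'a"
  assumes "\<And>y. H (y + 1) = H y"
  shows "H (y + real m) = H y"
proof (induction m arbitrary: y)
  case (Suc m)
  have "y + real (Suc m) = (y + real m) + 1"
    by simp
  then show ?case
    by (simp only: assms Suc.IH)
qed simp

lemma integral_periodic_rescaled_cell:
  fixes H :: "real \<Rightarrow> 'a::banach"
  assumes "Q > 0" and "continuous_on UNIV H" and per: "\<And>y. H (y + 1) = H y"
  shows "integral {real m / Q..(real m + 1) / Q} (\<lambda>x. H (real Q * x)) = integral {0..1} H /\<^sub>R real Q"
proof -
  have "(H has_integral integral {0..1} H) (cbox 0 1)"
    using integrable_continuous_real[OF continuous_on_subset[OF assms(2) subset_UNIV], of 0 1]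
    by (simp add: has_integral_integral)
  from has_integral_affinity'[OF this, of "real Q" "- real m"]
  have "((\<lambda>x. H (real Q * x - real m)) has_integral integral {0..1} H /\<^sub>R real Q)
          {real m / Q..(real m + 1) / Q}"
    using \<open>Q > 0\<close> by (simp add: divide_inverse mult.commute add.commute)
  moreover have "H (real Q * x - real m) = H (real Q * x)" for x
    using periodic_nat_shift[of H, OF per, of "real Q * x - real m" m] by simp
  ultimately show ?thesis
    by (simp add: integral_unique)
qed

lemma norm_integral_mult_rescaled_periodic_cell_le:
  fixes G H :: "real \<Rightarrow> complex" and e :: real and Q m :: nat
  defines "a \<equiv> real m / Q" and "b \<equiv> (real m + 1) / Q"
  assumes "Q > 0" and cont_H: "continuous_on UNIV H" and per: "\<And>y. H (y + 1) = H y"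
    and norm_H: "\<And>y. cmod (H y) \<le> 1"
    and cont_G: "continuous_on {a..b} G" and "cmod (G a) \<le> 1"
    and osc_G: "\<And>x. x \<in> {a..b} \<Longrightarrow> cmod (G x - G a) \<le> e"
  shows "cmod (integral {a..b} (\<lambda>x. G x * H (real Q * x))) \<le> (e + cmod (integral {0..1} H)) / Q"
proof -
  define D where "D x = (G x - G a) * H (real Q * x)" for x
  have cont_HQ: "continuous_on X (\<lambda>x. H (real Q * x))" for X
    by (rule continuous_on_compose2[OF cont_H]) (auto intro!: continuous_intros)
  have cont_D: "continuous_on {a..b} D"
    unfolding D_def by (intro continuous_intros cont_G cont_HQ)
  have "a \<le> b"
    using \<open>Q > 0\<close> by (simp add: a_def b_def divide_right_mono)
  have "cmod (D x) \<le> e" if "x \<in> {a..b}" for x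
    using mult_mono[OF osc_G[OF that] norm_H[of "real Q * x"]] order_trans[OF norm_ge_zero osc_G[OF that]]
    by (simp add: D_def norm_mult)
  then have "cmod (integral {a..b} D) \<le> e * (b - a)"
    by (intro integral_bound[OF \<open>a \<le> b\<close> cont_D])
  also have "e * (b - a) = e / Q"
    using \<open>Q > 0\<close> by (simp add: a_def b_def field_simps)
  finally have small_D: "cmod (integral {a..b} D) \<le> e / Q" .
  have int_HQ: "(\<lambda>x. H (real Q * x)) integrable_on {a..b}"
    by (intro integrable_continuous_real cont_HQ)
  have "(\<lambda>x. G x * H (real Q * x)) integrable_on {a..b}"
    by (intro integrable_continuous_real continuous_intros cont_G cont_HQ)
  then have "integral {a..b} D
      = integral {a..b} (\<lambda>x. G x * H (real Q * x)) - G a * integral {a..b} (\<lambda>x. H (real Q * x))"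
    unfolding D_def left_diff_distrib
    by (simp add: integral_diff integrable_on_mult_right[OF int_HQ])
  then have "integral {a..b} (\<lambda>x. G x * H (real Q * x))
      = integral {a..b} D + G a * integral {a..b} (\<lambda>x. H (real Q * x))"
    by simp
  also have "integral {a..b} (\<lambda>x. H (real Q * x)) = integral {0..1} H / of_nat Q"
    using integral_periodic_rescaled_cell[OF \<open>Q > 0\<close> cont_H per, of m]
    by (simp add: a_def b_def scaleR_conv_of_real divide_inverse mult.commute)
  finally have "cmod (integral {a..b} (\<lambda>x. G x * H (real Q * x)))
      \<le> cmod (integral {a..b} D) + cmod (G a) * (cmod (integral {0..1} H) / Q)"
    by (metis norm_triangle_ineq norm_mult norm_divide norm_of_nat)
  also have "\<dots> \<le> e / Q + 1 * (cmod (integral {0..1} H) / Q)"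
    using small_D \<open>cmod (G a) \<le> 1\<close> by (intro add_mono mult_right_mono) auto
  finally show ?thesis
    by (simp add: add_divide_distrib)
qed

lemma eventually_norm_integral_mult_rescaled_periodic_le:
  fixes G H :: "real \<Rightarrow> complex" and e :: real
  assumes cont_G: "continuous_on {0..1} G" and norm_G: "\<And>x. x \<in> {0..1} \<Longrightarrow> cmod (G x) \<le> 1"
    and cont_H: "continuous_on UNIV H" and norm_H: "\<And>y. cmod (H y) \<le> 1"
    and per: "\<And>y. H (y + 1) = H y" and "e > 0"
  shows "\<forall>\<^sub>F Q in sequentially.
           cmod (integral {0..1} (\<lambda>x. G x * H (real Q * x))) \<le> e + cmod (integral {0..1} H)"
proof -
  have "uniformly_continuous_on {0..1} G"
    by (rule compact_uniformly_continuous[OF cont_G compact_Icc])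
  then obtain d where "d > 0" and d: "\<And>x x'. x \<in> {0..1} \<Longrightarrow> x' \<in> {0..1} \<Longrightarrow> dist x' x < d \<Longrightarrow> dist (G x') (G x) < e"
    using \<open>e > 0\<close> unfolding uniformly_continuous_on_def by metis
  obtain N :: nat where "N > 0" "1 / real N < d"
    using ex_inverse_of_nat_less[OF \<open>d > 0\<close>] by (auto simp: inverse_eq_divide)
  have "cmod (integral {0..1} (\<lambda>x. G x * H (real Q * x))) \<le> e + cmod (integral {0..1} H)"
    if "N \<le> Q" for Q
  proof -
    have "Q > 0"
      using \<open>N > 0\<close> that by simp
    have "1 / real Q \<le> 1 / real N"
      using \<open>N > 0\<close> that by (intro divide_left_mono) auto
    then have "1 / real Q < d"
      using \<open>1 / real N < d\<close> by linarith
    have cell: "cmod (integral {real m / Q..(real m + 1) / Q} (\<lambda>x. G x * H (real Q * x)))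
                  \<le> (e + cmod (integral {0..1} H)) / Q" if "m < Q" for m
    proof (rule norm_integral_mult_rescaled_periodic_cell_le[OF \<open>Q > 0\<close> cont_H per norm_H])
      have cell_sub: "{real m / Q..(real m + 1) / Q} \<subseteq> {0..1}"
        using \<open>m < Q\<close> by (auto simp: field_simps)
      then show "continuous_on {real m / Q..(real m + 1) / Q} G"
        using continuous_on_subset[OF cont_G] by blast
      show "cmod (G (real m / Q)) \<le> 1"
        using norm_G cell_sub \<open>Q > 0\<close> by (auto simp: field_simps)
      fix x assume x: "x \<in> {real m / Q..(real m + 1) / Q}"
      then have "dist x (real m / Q) < d"
        using \<open>1 / real Q < d\<close> by (auto simp: dist_real_def add_divide_distrib)
      moreover have "real m / Q \<in> {real m / Q..(real m + 1) / Q}"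
        by (simp add: divide_right_mono)
      then have "x \<in> {0..1}" "real m / Q \<in> {0..1}"
        using x cell_sub by blast+
      ultimately show "cmod (G x - G (real m / Q)) \<le> e"
        using d[of "real m / Q" x] by (simp add: dist_norm)
    qed
    have "continuous_on {0..1} (\<lambda>x. G x * H (real Q * x))"
      by (intro continuous_intros cont_G continuous_on_compose2[OF cont_H]) auto
    then show ?thesis
      by (intro norm_integral_le_uniform_grid[OF \<open>Q > 0\<close>] integrable_continuous_real cell)
  qed
  then show ?thesis
    unfolding eventually_sequentially by blast
qed

lemma unit_square_eq_cbox: "({0..1} \<times> {0..1} :: (real \<times> real) set) = cbox (0, 0) (1, 1)"
  by (simp add: cbox_Pair_eq)

definition torus_char :: "int \<times> int \<Rightarrow> real \<Rightarrow> real \<Rightarrow> complex" where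
  "torus_char p x y =
     exp (2 * pi * \<i> * complex_of_real (real_of_int (fst p) * x + real_of_int (snd p) * y))"

lemma continuous_on_torus_char_comp [continuous_intros]:
  assumes "continuous_on X u" "continuous_on X v"
  shows "continuous_on X (\<lambda>x. torus_char p (u x) (v x))"
  unfolding torus_char_def by (intro continuous_intros assms)

lemma trig_poly_T2_torus_char_sum:
  assumes "trig_poly_T2 f"
  obtains S a where "finite S" "f = (\<lambda>x y. \<Sum>p\<in>S. a p * torus_char p x y)"
  using assms unfolding trig_poly_T2_def torus_char_def
  by (auto simp: case_prod_unfold fun_eq_iff)

lemma integral_exp_2pi_int:
  fixes k :: int
  shows "integral {0..1} (\<lambda>x. exp (2 * pi * \<i> * complex_of_real (real_of_int k * x))) = (if k = 0 then 1 else 0)"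
proof (cases "k = 0")
  case False
  define w where "w = 2 * pi * \<i> * of_int k"
  have "w \<noteq> 0"
    using False by (simp add: w_def)
  have "((\<lambda>x. exp (w * of_real x)) has_integral exp (w * of_real 1) / w - exp (w * of_real 0) / w) {0..1}"
  proof (rule fundamental_theorem_of_calculus)
    fix x :: real
    have "((\<lambda>z. exp (w * z) / w) has_field_derivative exp (w * of_real x)) (at (of_real x))"
      using \<open>w \<noteq> 0\<close> by (auto intro!: derivative_eq_intros)
    then show "((\<lambda>x. exp (w * of_real x) / w) has_vector_derivative exp (w * of_real x)) (at x within {0..1})"
      by (rule has_vector_derivative_real_field)
  qed simp
  moreover have "exp w = 1"
    using exp_integer_2pi[of "of_int k"] by (simp add: w_def mult_ac)
  ultimately show ?thesis
    using False by (simp add: integral_unique w_def mult_ac)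
qed simp

lemma int_T2_torus_char: "int_T2 (torus_char p) = (if p = (0, 0) then 1 else 0)"
proof -
  obtain k l where p: "p = (k, l)"
    by fastforce
  have "int_T2 (torus_char p) = integral (cbox 0 1) (\<lambda>x. integral (cbox 0 1) (\<lambda>y.
      exp (2 * pi * \<i> * complex_of_real (real_of_int k * x)) * exp (2 * pi * \<i> * complex_of_real (real_of_int l * y))))"
    unfolding int_T2_def torus_char_def p unit_square_eq_cbox
    by (simp add: integral_prod_continuous continuous_intros exp_add[symmetric] algebra_simps)
  also have "\<dots> = integral {0..1} (\<lambda>x. exp (2 * pi * \<i> * complex_of_real (real_of_int k * x)))
      * integral {0..1} (\<lambda>y. exp (2 * pi * \<i> * complex_of_real (real_of_int l * y)))"
    by (simp only: box_real integral_mult_right integral_mult_left)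
  also have "\<dots> = (if p = (0, 0) then 1 else 0)"
    unfolding integral_exp_2pi_int by (simp add: p)
  finally show ?thesis .
qed

lemma int_mu_torus_char_sum:
  assumes "finite S"
  shows "int_mu n c q y0 (\<lambda>x y. \<Sum>p\<in>S. a p * torus_char p x y) = (\<Sum>p\<in>S. a p * int_mu n c q y0 (torus_char p))"
  unfolding int_mu_def Gamma_def using assms
  by (simp add: integral_sum integrable_continuous_real continuous_intros)

lemma int_T2_torus_char_sum:
  assumes "finite S"
  shows "int_T2 (\<lambda>x y. \<Sum>p\<in>S. a p * torus_char p x y) = (\<Sum>p\<in>S. a p * int_T2 (torus_char p))"
  unfolding int_T2_def unit_square_eq_cbox using assms
  by (simp add: integral_sum integrable_continuous continuous_intros)

lemma int_mu_torus_char_horizontal: "int_mu n c q y0 (torus_char (k, 0)) = int_T2 (torus_char (k, 0))"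
  unfolding int_mu_def int_T2_torus_char torus_char_def
  using integral_exp_2pi_int[of k] by simp

lemma Gamma_fun_upd_last:
  assumes "n \<ge> 1"
  shows "Gamma n c (q(n := Q)) y0 x
           = y0 - (\<Sum>j\<in>{1..<n}. c j * sin (2 * pi * real (q j) * x)) - c n * sin (2 * pi * (real Q * x))"
proof -
  have "{1..n} = insert n {1..<n}"
    using assms by auto
  moreover have "(\<Sum>j\<in>{1..<n}. c j * sin (2 * pi * real ((q(n := Q)) j) * x))
      = (\<Sum>j\<in>{1..<n}. c j * sin (2 * pi * real (q j) * x))"
    by (intro sum.cong) auto
  ultimately show ?thesis
    unfolding Gamma_def by (simp add: mult_ac)
qed

lemma eventually_norm_int_mu_torus_char_le:
  fixes k l :: int and e :: real
  assumes "n \<ge> 1" "e > 0"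
    and bessel: "cmod (integral {0..1} (\<lambda>y. exp (\<i> * of_real (- (2 * pi * l * c n) * sin (2 * pi * y))))) \<le> e"
  shows "\<forall>\<^sub>F Q in sequentially. \<forall>y0. cmod (int_mu n c (q(n := Q)) y0 (torus_char (k, l))) \<le> 2 * e"
proof -
  define S where "S x = (\<Sum>j\<in>{1..<n}. c j * sin (2 * pi * real (q j) * x))" for x
  define G where "G x = exp (2 * pi * \<i> * complex_of_real (real_of_int k * x - real_of_int l * S x))" for x
  define H where "H y = exp (\<i> * of_real (- (2 * pi * l * c n) * sin (2 * pi * y)))" for y
  \<comment> \<open>The last mode of \<open>\<Gamma>\<^sub>n\<close> oscillates fast; everything else is a fixed continuous weight.\<close>
  have factor: "torus_char (k, l) x (Gamma n c (q(n := Q)) y0 x)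
      = exp (2 * pi * \<i> * complex_of_real (real_of_int l * y0)) * (G x * H (real Q * x))" for Q x y0
  proof -
    have "2 * pi * \<i> * complex_of_real (real_of_int k * x + real_of_int l * Gamma n c (q(n := Q)) y0 x)
        = 2 * pi * \<i> * complex_of_real (real_of_int l * y0)
          + (2 * pi * \<i> * complex_of_real (real_of_int k * x - real_of_int l * S x)
          + \<i> * of_real (- (2 * pi * l * c n) * sin (2 * pi * (real Q * x))))"
      unfolding Gamma_fun_upd_last[OF \<open>n \<ge> 1\<close>] S_def by (simp add: algebra_simps)
    then show ?thesis
      unfolding torus_char_def G_def H_def fst_conv snd_conv by (simp only: exp_add)
  qed
  have "continuous_on X S" for X
    unfolding S_def by (intro continuous_intros)
  moreover have "cmod (G x) \<le> 1" for x
    using norm_exp_i_times[of "2 * pi * (real_of_int k * x - real_of_int l * S x)"]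
    by (simp add: G_def mult_ac)
  moreover have "H (y + 1) = H y" for y
  proof -
    have "sin (2 * pi * (y + 1)) = sin (2 * pi * y)"
      using sin_periodic[of "2 * pi * y"] by (simp add: algebra_simps)
    then show ?thesis
      by (simp add: H_def)
  qed
  ultimately have "\<forall>\<^sub>F Q in sequentially. cmod (integral {0..1} (\<lambda>x. G x * H (real Q * x))) \<le> e + cmod (integral {0..1} H)"
    using \<open>e > 0\<close>
    by (intro eventually_norm_integral_mult_rescaled_periodic_le) (auto simp: G_def H_def intro!: continuous_intros)
  then show ?thesis
  proof (rule eventually_mono, intro allI)
    fix Q y0
    assume "cmod (integral {0..1} (\<lambda>x. G x * H (real Q * x))) \<le> e + cmod (integral {0..1} H)"
    moreover have "int_mu n c (q(n := Q)) y0 (torus_char (k, l))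
        = exp (2 * pi * \<i> * complex_of_real (real_of_int l * y0)) * integral {0..1} (\<lambda>x. G x * H (real Q * x))"
      by (simp add: int_mu_def factor)
    then have "cmod (int_mu n c (q(n := Q)) y0 (torus_char (k, l))) = cmod (integral {0..1} (\<lambda>x. G x * H (real Q * x)))"
      using norm_exp_i_times[of "2 * pi * (real_of_int l * y0)"] by (simp add: norm_mult mult_ac)
    moreover have "cmod (integral {0..1} H) \<le> e"
      using bessel by (simp add: H_def[abs_def])
    ultimately show "cmod (int_mu n c (q(n := Q)) y0 (torus_char (k, l))) \<le> 2 * e"
      by linarith
  qed
qed

lemma int_mu_torus_char_approx:
  assumes "n \<ge> 1" "e > 0"
  obtains ct where "\<And>c q p. c n > ct \<Longrightarrow> \<forall>\<^sub>F Q in sequentially. \<forall>y0.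
      cmod (int_mu n c (q(n := Q)) y0 (torus_char p) - int_T2 (torus_char p)) \<le> e"
proof -
  have "\<forall>\<^sub>F s in at_infinity. cmod (integral {0..1} (\<lambda>y. exp (\<i> * of_real (s * sin (2 * pi * y))))) < e / 2"
    using tendstoD[OF integral_exp_sin_phase_tendsto_0, of "e / 2"] \<open>e > 0\<close> by (simp add: dist_norm)
  then obtain T where T: "\<And>s. T \<le> \<bar>s\<bar> \<Longrightarrow>
      cmod (integral {0..1} (\<lambda>y. exp (\<i> * of_real (s * sin (2 * pi * y))))) < e / 2"
    unfolding eventually_at_infinity by auto
  show thesis
  proof (rule that[of "max T 0 / (2 * pi)"])
    fix c :: "nat \<Rightarrow> real" and q :: "nat \<Rightarrow> nat" and p :: "int \<times> int"
    assume c: "c n > max T 0 / (2 * pi)"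
    obtain k l where p: "p = (k, l)"
      by fastforce
    show "\<forall>\<^sub>F Q in sequentially. \<forall>y0. cmod (int_mu n c (q(n := Q)) y0 (torus_char p) - int_T2 (torus_char p)) \<le> e"
    proof (cases "l = 0")
      case True
      then show ?thesis
        using \<open>e > 0\<close> by (simp add: p int_mu_torus_char_horizontal)
    next
      case False
      \<comment> \<open>Since \<open>|l| \<ge> 1\<close>, the frequency of the fast mode is at least \<open>2 \<pi> c\<^sub>n\<close>, whatever \<open>p\<close> is.\<close>
      have "0 \<le> max T 0 / (2 * pi)"
        by simp
      then have "0 \<le> c n"
        using c by linarith
      have "max T 0 \<le> 2 * pi * c n"
        using c by (simp add: field_simps)
      also have "\<dots> \<le> 2 * pi * (\<bar>real_of_int l\<bar> * c n)"
        using False \<open>0 \<le> c n\<close> mult_right_mono[of 1 "\<bar>real_of_int l\<bar>" "c n"] by simp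
      also have "\<dots> = \<bar>- (2 * pi * l * c n)\<bar>"
        using \<open>0 \<le> c n\<close> by (simp add: abs_mult)
      finally have "cmod (integral {0..1} (\<lambda>y. exp (\<i> * of_real (- (2 * pi * l * c n) * sin (2 * pi * y))))) \<le> e / 2"
        using T[of "- (2 * pi * l * c n)"] by simp
      with eventually_norm_int_mu_torus_char_le[where k = k and l = l and c = c and q = q and e = "e / 2"] \<open>n \<ge> 1\<close> \<open>e > 0\<close>
      show ?thesis
        by (simp add: p False int_T2_torus_char)
    qed
  qed
qed

lemma norm_int_mu_sub_int_T2_torus_char_sum_le:
  assumes "finite S"
    and close: "\<And>p. p \<in> S \<Longrightarrow> cmod (int_mu n c q y0 (torus_char p) - int_T2 (torus_char p)) \<le> \<delta>"
  shows "cmod (int_mu n c q y0 (\<lambda>x y. \<Sum>p\<in>S. a p * torus_char p x y)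
                - int_T2 (\<lambda>x y. \<Sum>p\<in>S. a p * torus_char p x y)) \<le> \<delta> * (\<Sum>p\<in>S. cmod (a p))"
proof -
  have "cmod (int_mu n c q y0 (\<lambda>x y. \<Sum>p\<in>S. a p * torus_char p x y)
                - int_T2 (\<lambda>x y. \<Sum>p\<in>S. a p * torus_char p x y))
      = cmod (\<Sum>p\<in>S. a p * (int_mu n c q y0 (torus_char p) - int_T2 (torus_char p)))"
    using \<open>finite S\<close> by (simp add: int_mu_torus_char_sum int_T2_torus_char_sum right_diff_distrib sum_subtractf)
  also have "\<dots> \<le> (\<Sum>p\<in>S. cmod (a p) * \<delta>)"
    using close by (intro order_trans[OF norm_sum] sum_mono) (simp add: norm_mult mult_left_mono)
  finally show ?thesis
    by (simp add: sum_distrib_left mult.commute)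
qed

lemma int_mu_trig_poly_approx:
  assumes "n \<ge> 1" "trig_poly_T2 f" "\<epsilon> > 0"
  obtains ct where "\<And>c q. c n > ct \<Longrightarrow> \<forall>\<^sub>F Q in sequentially. \<forall>y0.
      cmod (int_mu n c (q(n := Q)) y0 f - int_T2 f) < \<epsilon>"
proof -
  obtain S a where "finite S" and f: "f = (\<lambda>x y. \<Sum>p\<in>S. a p * torus_char p x y)"
    using trig_poly_T2_torus_char_sum[OF \<open>trig_poly_T2 f\<close>] by blast
  define A where "A = (\<Sum>p\<in>S. cmod (a p))"
  have "A \<ge> 0"
    unfolding A_def by (simp add: sum_nonneg)
  then have "\<epsilon> / (A + 1) > 0" "\<epsilon> / (A + 1) * A < \<epsilon>"
    using \<open>\<epsilon> > 0\<close> by (simp_all add: field_simps)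
  obtain ct where ct: "\<And>c q p. c n > ct \<Longrightarrow> \<forall>\<^sub>F Q in sequentially. \<forall>y0.
      cmod (int_mu n c (q(n := Q)) y0 (torus_char p) - int_T2 (torus_char p)) \<le> \<epsilon> / (A + 1)"
    using int_mu_torus_char_approx[OF \<open>n \<ge> 1\<close> \<open>\<epsilon> / (A + 1) > 0\<close>] by blast
  show thesis
  proof (rule that[of ct])
    fix c :: "nat \<Rightarrow> real" and q :: "nat \<Rightarrow> nat"
    assume "c n > ct"
    then have "\<forall>\<^sub>F Q in sequentially. \<forall>p\<in>S. \<forall>y0.
        cmod (int_mu n c (q(n := Q)) y0 (torus_char p) - int_T2 (torus_char p)) \<le> \<epsilon> / (A + 1)"
      using ct by (auto simp: eventually_ball_finite \<open>finite S\<close>)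
    then show "\<forall>\<^sub>F Q in sequentially. \<forall>y0. cmod (int_mu n c (q(n := Q)) y0 f - int_T2 f) < \<epsilon>"
    proof (rule eventually_mono, intro allI)
      fix Q y0
      assume "\<forall>p\<in>S. \<forall>y0. cmod (int_mu n c (q(n := Q)) y0 (torus_char p) - int_T2 (torus_char p)) \<le> \<epsilon> / (A + 1)"
      then have "cmod (int_mu n c (q(n := Q)) y0 f - int_T2 f) \<le> \<epsilon> / (A + 1) * A"
        unfolding f A_def using \<open>finite S\<close> by (intro norm_int_mu_sub_int_T2_torus_char_sum_le) auto
      with \<open>\<epsilon> / (A + 1) * A < \<epsilon>\<close> show "cmod (int_mu n c (q(n := Q)) y0 f - int_T2 f) < \<epsilon>"
        by linarith
    qed
  qed
qed

theorem lemma5p1: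
  fixes n :: nat
  assumes "n \<ge> 1"
  shows "\<forall>f. trig_poly_T2 f \<longrightarrow> (\<forall>\<epsilon>>0. \<exists>ct::real.
    \<forall>c :: nat \<Rightarrow> real. (\<forall>j\<in>{1..n}. c j > 0) \<longrightarrow> c n > ct \<longrightarrow>
    (\<forall>q :: nat \<Rightarrow> nat. (\<forall>j\<in>{1..<n}. q j > 0) \<longrightarrow>
      (\<exists>qt::real. \<forall>Q::nat. Q > 0 \<longrightarrow> real Q > qt \<longrightarrow>
        (\<forall>y0::real. cmod (int_mu n c (q(n := Q)) y0 f - int_T2 f) < \<epsilon>))))"
proof (intro allI impI)
  fix f :: "real \<Rightarrow> real \<Rightarrow> complex" and \<epsilon> :: real
  assume "trig_poly_T2 f" "\<epsilon> > 0"
  obtain ct where ct: "\<And>c q. c n > ct \<Longrightarrow> \<forall>\<^sub>F Q in sequentially. \<forall>y0.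
      cmod (int_mu n c (q(n := Q)) y0 f - int_T2 f) < \<epsilon>"
    using int_mu_trig_poly_approx[OF \<open>n \<ge> 1\<close> \<open>trig_poly_T2 f\<close> \<open>\<epsilon> > 0\<close>] by blast
  show "\<exists>ct. \<forall>c. (\<forall>j\<in>{1..n}. c j > 0) \<longrightarrow> c n > ct \<longrightarrow> (\<forall>q. (\<forall>j\<in>{1..<n}. q j > 0) \<longrightarrow>
      (\<exists>qt. \<forall>Q. Q > 0 \<longrightarrow> real Q > qt \<longrightarrow> (\<forall>y0. cmod (int_mu n c (q(n := Q)) y0 f - int_T2 f) < \<epsilon>)))"
  proof (rule exI[of _ ct], intro allI impI)
    fix c :: "nat \<Rightarrow> real" and q :: "nat \<Rightarrow> nat"
    assume "c n > ct"
    then obtain N where "\<And>Q y0. N \<le> Q \<Longrightarrow> cmod (int_mu n c (q(n := Q)) y0 f - int_T2 f) < \<epsilon>"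
      using ct unfolding eventually_sequentially by blast
    then show "\<exists>qt. \<forall>Q. Q > 0 \<longrightarrow> real Q > qt \<longrightarrow> (\<forall>y0. cmod (int_mu n c (q(n := Q)) y0 f - int_T2 f) < \<epsilon>)"
      by (intro exI[of _ "real N"]) auto
  qed
qed

end
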